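(* Let $\Lambda=(\lambda_1,\lambda_2)\in(0,\infty)^2$, $\phi\in[0,1)$ and $0\le\theta<\theta'\le 1$. Let $(X_1,X_2)\sim\mathcal{BZIP}^-(\Lambda,\theta,\phi)$ and $(X_1',X_2')\sim\mathcal{BZIP}^-(\Lambda,\theta',\phi)$. Then $(X_1',X_2')\prec_{PQD}(X_1,X_2)$, i.e. $H^-_{\Lambda,\phi,\theta'}(x_1,x_2)\le H^-_{\Lambda,\phi,\theta}(x_1,x_2)$ for all $(x_1,x_2)\in\mathbb{R}^2$, where $H^-_{\Lambda,\phi,\vartheta}$ is the joint distribution function of $\mathcal{BZIP}^-(\Lambda,\vartheta,\phi)$.
   Context: For $\mu>0$, $G_\mu$ denotes the distribution function of the Poisson distribution with mean $\mu$, and $G_\mu^{-1}(u)=\inf\{x\in\mathbb{N}:G_\mu(x)\ge u\}$ its quantile function (for $\mu=0$, $G_0^{-1}\equiv 0$). The model $\mathcal{BZIP}^{\pm}(\Lambda,\theta,\phi)$, with $\Lambda=(\lambda_1,\lambda_2)\in(0,\infty)^2$, $\theta\in[0,1]$, $\phi\in[0,1)$, is the law of $(X_1,X_2)=W\,(T_1,T_2)$, where: $W\sim$ Bernoulli$(1-\phi)$; $T_j=Y_j+Z_j$ for $j=1,2$; $Y_j\sim\mathcal{P}((1-\theta)\lambda_j)$; $U\sim\mathcal U(0,1)$; in $\mathcal{BZIP}^+$, $(Z_1,Z_2)=(G^{-1}_{\theta\lambda_1}(U),G^{-1}_{\theta\lambda_2}(U))$, and in $\mathcal{BZIP}^-$,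 $(Z_1,Z_2)=(G^{-1}_{\theta\lambda_1}(U),G^{-1}_{\theta\lambda_2}(1-U))$; $W$, $Y_1$, $Y_2$, $U$ are mutually independent. For random pairs with the same marginals, $(A_1,A_2)\prec_{PQD}(B_1,B_2)$ means $P(A_1\le x_1,A_2\le x_2)\le P(B_1\le x_1,B_2\le x_2)$ for all $x_1,x_2$. *)

theory Defs
  imports "HOL-Probability.Probability"
begin

definition pois :: "real \<Rightarrow> nat pmf" where
  "pois mu = (if mu = 0 then return_pmf 0 else poisson_pmf mu)"

definition pois_cdf :: "real \<Rightarrow> nat \<Rightarrow> real" where
  "pois_cdf mu x = measure_pmf.prob (pois mu) {..x}"

definition pois_quantile :: "real \<Rightarrow> real \<Rightarrow> nat" where
  "pois_quantile mu u = (if mu = 0 then 0 else Inf {x::nat. u \<le> pois_cdf mu x})"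

definition bzip_space :: "real \<times> real \<Rightarrow> real \<Rightarrow> real \<Rightarrow> ((bool \<times> nat \<times> nat) \<times> real) measure" where
  "bzip_space Lam theta phi =
     measure_pmf (pair_pmf (bernoulli_pmf (1 - phi))
                   (pair_pmf (pois ((1 - theta) * fst Lam)) (pois ((1 - theta) * snd Lam))))
     \<Otimes>\<^sub>M uniform_measure lborel {0..1::real}"

text \<open>The random vector (X1, X2) = W (Y1 + Z1, Y2 + Z2) of BZIP^- (counter-monotone Z).\<close>
definition bzip_minus_rv :: "real \<times> real \<Rightarrow> real \<Rightarrow> (bool \<times> nat \<times> nat) \<times> real \<Rightarrow> nat \<times> nat" where
  "bzip_minus_rv Lam theta \<omega> =
     (case \<omega> of ((w, y1, y2), u) \<Rightarrow>
        if w then (y1 + pois_quantile (theta * fst Lam) u,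
                   y2 + pois_quantile (theta * snd Lam) (1 - u))
        else (0, 0))"

definition H_minus :: "real \<times> real \<Rightarrow> real \<Rightarrow> real \<Rightarrow> real \<Rightarrow> real \<Rightarrow> real" where
  "H_minus Lam phi theta x1 x2 =
     measure (bzip_space Lam theta phi)
       {\<omega> \<in> space (bzip_space Lam theta phi).
          real (fst (bzip_minus_rv Lam theta \<omega>)) \<le> x1 \<and>
          real (snd (bzip_minus_rv Lam theta \<omega>)) \<le> x2}"

end

theory Submission
  imports Defs
begin

text \<open>
  On the event W = 1 the vector is T = Y + Z, whose joint distribution function is the
  convolution of the independent Poisson((1 - theta) lambda_j) weights of Y with the joint
  distribution function max 0 (G_1 + G_2 - 1) of the countermonotone pair Z, i.e. the lower
  Frechet bound of its Poisson(theta lambda_j) marginals. Raising theta to theta' moves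
  independent Poisson((theta' - theta) lambda_j) summands D_j from Y_j into Z_j. The pair Z + D
  has the Poisson(theta' lambda_j) marginals of the new Z, and every joint distribution function
  dominates the lower Frechet bound of its marginals; hence the new countermonotone part lies
  below the old one convolved with D, and convolving with the remaining part of Y preserves this.
\<close>

definition poisson_weight :: "real \<Rightarrow> nat \<Rightarrow> real" where
  "poisson_weight mu n = exp (- mu) * mu ^ n / fact n"

lemma poisson_weight_nonneg: "0 \<le> mu \<Longrightarrow> 0 \<le> poisson_weight mu n"
  by (simp add: poisson_weight_def)

definition seq_conv :: "(nat \<Rightarrow> real) \<Rightarrow> (nat \<Rightarrow> real) \<Rightarrow> nat \<Rightarrow> real" where
  "seq_conv p q n = (\<Sum>k\<le>n. p k * q (n - k))"

lemma seq_conv_assoc: "seq_conv (seq_conv p q) r = seq_conv p (seq_conv q r)"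
proof
  fix n
  have "seq_conv (seq_conv p q) r n = (\<Sum>y\<le>n. \<Sum>k\<in>{k\<in>{..n}. k \<le> y}. p k * q (y - k) * r (n - y))"
    unfolding seq_conv_def by (intro sum.cong) (auto simp: sum_distrib_right intro!: sum.cong)
  also have "\<dots> = (\<Sum>k\<le>n. \<Sum>y\<in>{y\<in>{..n}. k \<le> y}. p k * q (y - k) * r (n - y))"
    by (rule sum.swap_restrict) auto
  also have "\<dots> = seq_conv p (seq_conv q r) n"
    unfolding seq_conv_def
  proof (rule sum.cong)
    fix k assume "k \<in> {..n}"
    then have "{y\<in>{..n}. k \<le> y} = {0 + k..(n - k) + k}" by auto
    then have "(\<Sum>y\<in>{y\<in>{..n}. k \<le> y}. p k * q (y - k) * r (n - y)) =
        (\<Sum>s\<in>{0..n - k}. p k * q (s + k - k) * r (n - (s + k)))"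
      by (simp only: sum.shift_bounds_cl_nat_ivl)
    then show "(\<Sum>y\<in>{y\<in>{..n}. k \<le> y}. p k * q (y - k) * r (n - y)) =
        p k * (\<Sum>s\<le>n - k. q s * r (n - k - s))"
      by (simp add: sum_distrib_left atMost_atLeast0 mult.assoc diff_diff_eq add.commute)
  qed simp
  finally show "seq_conv (seq_conv p q) r n = seq_conv p (seq_conv q r) n" .
qed

lemma seq_conv_swap:
  "seq_conv p (\<lambda>i. seq_conv q (F i) n) = (\<lambda>m. seq_conv q (\<lambda>j. seq_conv p (\<lambda>i. F i j) m) n)"
proof
  fix m
  show "seq_conv p (\<lambda>i. seq_conv q (F i) n) m = seq_conv q (\<lambda>j. seq_conv p (\<lambda>i. F i j) m) n"
    unfolding seq_conv_def by (simp add: sum_distrib_left mult.left_commute sum.swap[of _ "{..m}"])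
qed

lemma seq_conv_mono:
  assumes "\<And>k. 0 \<le> p k" and "\<And>k. q k \<le> r k"
  shows "seq_conv p q n \<le> seq_conv p r n"
  unfolding seq_conv_def using assms by (intro sum_mono mult_left_mono) auto

lemma poisson_weight_add: "poisson_weight (a + b) = seq_conv (poisson_weight a) (poisson_weight b)"
proof
  fix n
  have "poisson_weight (a + b) n =
      exp (-a) * exp (-b) * (\<Sum>k\<le>n. of_nat (n choose k) * a ^ k * b ^ (n - k)) / fact n"
    by (simp add: poisson_weight_def binomial_ring exp_add[symmetric])
  also have "\<dots> = (\<Sum>k\<le>n. exp (-a) * exp (-b) * (of_nat (n choose k) * a ^ k * b ^ (n - k)) / fact n)"
    by (simp add: sum_distrib_left sum_divide_distrib)
  also have "\<dots> = seq_conv (poisson_weight a) (poisson_weight b) n"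
    unfolding seq_conv_def
  proof (rule sum.cong)
    fix k assume "k \<in> {..n}"
    then have "k \<le> n" by simp
    then have "(fact n :: real) = of_nat (fact k * fact (n - k) * (n choose k))"
      by (simp only: binomial_fact_lemma of_nat_fact)
    then have "fact n = (of_nat (n choose k) :: real) * fact k * fact (n - k)"
      by simp
    then show "exp (-a) * exp (-b) * (of_nat (n choose k) * a ^ k * b ^ (n - k)) / fact n =
        poisson_weight a k * poisson_weight b (n - k)"
      using \<open>k \<le> n\<close> by (simp add: poisson_weight_def field_simps)
  qed simp
  finally show "poisson_weight (a + b) n = seq_conv (poisson_weight a) (poisson_weight b) n" .
qed

lemma pmf_pois: "0 \<le> mu \<Longrightarrow> pmf (pois mu) k = poisson_weight mu k"
  by (auto simp: pois_def poisson_weight_def indicator_def)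

lemma pois_cdf_eq_sum: "0 \<le> mu \<Longrightarrow> pois_cdf mu c = (\<Sum>k\<le>c. poisson_weight mu k)"
  by (simp add: pois_cdf_def measure_measure_pmf_finite pmf_pois)

lemma pois_cdf_le_1: "pois_cdf mu c \<le> 1"
  by (simp add: pois_cdf_def)

lemma pois_cdf_mono: "k \<le> k' \<Longrightarrow> pois_cdf mu k \<le> pois_cdf mu k'"
  unfolding pois_cdf_def by (intro measure_pmf.finite_measure_mono) auto

lemma pois_cdf_add:
  assumes "0 \<le> a" and "0 \<le> b"
  shows "pois_cdf (a + b) = seq_conv (poisson_weight b) (pois_cdf a)"
proof -
  have "pois_cdf mu = seq_conv (poisson_weight mu) (\<lambda>_. 1)" if "0 \<le> mu" for mu
    using that by (simp add: fun_eq_iff pois_cdf_eq_sum seq_conv_def)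
  then show ?thesis
    using assms by (simp add: add.commute[of a] poisson_weight_add seq_conv_assoc)
qed

definition lower_frechet :: "real \<Rightarrow> real \<Rightarrow> real" where
  "lower_frechet u v = max 0 (u + v - 1)"

lemma lower_frechet_mixture:
  assumes "\<And>i. i \<in> I \<Longrightarrow> 0 \<le> p i" and "\<And>j. j \<in> J \<Longrightarrow> 0 \<le> q j"
    and "sum p I \<le> 1" and "sum q J \<le> 1"
    and "\<And>i. i \<in> I \<Longrightarrow> f i \<le> 1" and "\<And>j. j \<in> J \<Longrightarrow> g j \<le> 1"
  shows "lower_frechet (\<Sum>i\<in>I. p i * f i) (\<Sum>j\<in>J. q j * g j)
    \<le> (\<Sum>i\<in>I. \<Sum>j\<in>J. p i * q j * lower_frechet (f i) (g j))" (is "_ \<le> ?rhs")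
proof -
  define A B where "A = (\<Sum>i\<in>I. p i * f i)" and "B = (\<Sum>j\<in>J. q j * g j)"
  define P Q where "P = sum p I" and "Q = sum q J"
  have "A \<le> P" "B \<le> Q"
    unfolding A_def B_def P_def Q_def using assms by (auto intro!: sum_mono mult_left_le)
  have "A * Q + P * B - P * Q = (\<Sum>i\<in>I. \<Sum>j\<in>J. p i * q j * (f i + g j - 1))"
    unfolding A_def B_def P_def Q_def
    by (simp add: algebra_simps sum_distrib_left sum_distrib_right sum.distrib sum_subtractf
        sum.swap[of _ J I])
  also have "\<dots> \<le> ?rhs"
    using assms by (intro sum_mono mult_left_mono) (auto simp: lower_frechet_def)
  finally have "A * Q + P * B - P * Q \<le> ?rhs" .
  moreover have "A + B - 1 \<le> A * Q + P * B - P * Q"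
  proof -
    \<comment> \<open>the difference is \<open>(A - P)(1 - Q) + (B - Q)(1 - P) - (1 - P)(1 - Q)\<close>\<close>
    have "(A - P) * (1 - Q) \<le> 0" "(B - Q) * (1 - P) \<le> 0" "0 \<le> (1 - P) * (1 - Q)"
      using \<open>A \<le> P\<close> \<open>B \<le> Q\<close> assms(3,4) unfolding P_def Q_def
      by (auto intro: mult_nonpos_nonneg)
    then show ?thesis by (simp add: algebra_simps)
  qed
  moreover have "0 \<le> ?rhs"
    using assms by (auto intro!: sum_nonneg simp: lower_frechet_def)
  ultimately show ?thesis
    unfolding A_def B_def lower_frechet_def by linarith
qed

definition seq_conv2 ::
    "(nat \<Rightarrow> real) \<Rightarrow> (nat \<Rightarrow> real) \<Rightarrow> (nat \<Rightarrow> nat \<Rightarrow> real) \<Rightarrow> nat \<Rightarrow> nat \<Rightarrow> real" where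
  "seq_conv2 p q K a b = seq_conv p (\<lambda>c. seq_conv q (K c) b) a"

lemma seq_conv2_assoc:
  "seq_conv2 (seq_conv p r) (seq_conv q s) K a b = seq_conv2 p q (seq_conv2 r s K) a b"
proof -
  have "seq_conv r (\<lambda>c. seq_conv q (seq_conv s (K c)) b) =
      (\<lambda>c. seq_conv q (\<lambda>d. seq_conv r (\<lambda>c'. seq_conv s (K c') d) c) b)"
    by (rule seq_conv_swap)
  then show ?thesis
    unfolding seq_conv2_def seq_conv_assoc by simp
qed

lemma seq_conv2_mono:
  assumes "\<And>k. 0 \<le> p k" and "\<And>k. 0 \<le> q k" and "\<And>c d. K c d \<le> K' c d"
  shows "seq_conv2 p q K a b \<le> seq_conv2 p q K' a b"
  unfolding seq_conv2_def using assms by (intro seq_conv_mono) auto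

definition countermonotone_cdf :: "real \<Rightarrow> real \<Rightarrow> nat \<Rightarrow> nat \<Rightarrow> real" where
  "countermonotone_cdf m1 m2 c d = lower_frechet (pois_cdf m1 c) (pois_cdf m2 d)"

lemma countermonotone_cdf_add_le:
  assumes "0 \<le> m1" "0 \<le> m2" "0 \<le> d1" "0 \<le> d2"
  shows "countermonotone_cdf (m1 + d1) (m2 + d2) c d
    \<le> seq_conv2 (poisson_weight d1) (poisson_weight d2) (countermonotone_cdf m1 m2) c d"
proof -
  have "countermonotone_cdf (m1 + d1) (m2 + d2) c d =
      lower_frechet (\<Sum>i\<le>c. poisson_weight d1 i * pois_cdf m1 (c - i))
        (\<Sum>j\<le>d. poisson_weight d2 j * pois_cdf m2 (d - j))"
    using assms by (simp add: countermonotone_cdf_def pois_cdf_add seq_conv_def)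
  also have "\<dots> \<le> (\<Sum>i\<le>c. \<Sum>j\<le>d. poisson_weight d1 i * poisson_weight d2 j *
      lower_frechet (pois_cdf m1 (c - i)) (pois_cdf m2 (d - j)))"
    using assms pois_cdf_le_1[of d1 c] pois_cdf_le_1[of d2 d]
    by (intro lower_frechet_mixture)
      (auto simp: poisson_weight_nonneg pois_cdf_le_1 simp flip: pois_cdf_eq_sum)
  also have "\<dots> = seq_conv2 (poisson_weight d1) (poisson_weight d2) (countermonotone_cdf m1 m2) c d"
    by (simp add: seq_conv2_def seq_conv_def countermonotone_cdf_def sum_distrib_left mult.assoc)
  finally show ?thesis .
qed

definition bzip_sum_cdf :: "real \<Rightarrow> real \<Rightarrow> real \<Rightarrow> nat \<Rightarrow> nat \<Rightarrow> real" where
  "bzip_sum_cdf L1 L2 t = seq_conv2 (poisson_weight ((1 - t) * L1)) (poisson_weight ((1 - t) * L2))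
     (countermonotone_cdf (t * L1) (t * L2))"

lemma bzip_sum_cdf_nonneg:
  assumes "0 \<le> L1" "0 \<le> L2" "t \<le> 1"
  shows "0 \<le> bzip_sum_cdf L1 L2 t a b"
  using assms unfolding bzip_sum_cdf_def seq_conv2_def seq_conv_def
  by (auto intro!: sum_nonneg mult_nonneg_nonneg poisson_weight_nonneg
      simp: countermonotone_cdf_def lower_frechet_def)

lemma bzip_sum_cdf_antimono:
  assumes "0 \<le> L1" "0 \<le> L2" "0 \<le> t" "t \<le> t'" "t' \<le> 1"
  shows "bzip_sum_cdf L1 L2 t' a b \<le> bzip_sum_cdf L1 L2 t a b"
proof -
  have split: "(1 - t) * L = (1 - t') * L + (t' - t) * L" "t' * L = t * L + (t' - t) * L" for L
    by (simp_all add: algebra_simps)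
  have "bzip_sum_cdf L1 L2 t' a b =
      seq_conv2 (poisson_weight ((1 - t') * L1)) (poisson_weight ((1 - t') * L2))
        (countermonotone_cdf (t * L1 + (t' - t) * L1) (t * L2 + (t' - t) * L2)) a b"
    unfolding bzip_sum_cdf_def split(2)[of L1] split(2)[of L2] ..
  also have "\<dots> \<le> seq_conv2 (poisson_weight ((1 - t') * L1)) (poisson_weight ((1 - t') * L2))
      (seq_conv2 (poisson_weight ((t' - t) * L1)) (poisson_weight ((t' - t) * L2))
        (countermonotone_cdf (t * L1) (t * L2))) a b"
    using assms by (intro seq_conv2_mono countermonotone_cdf_add_le poisson_weight_nonneg) auto
  also have "\<dots> = bzip_sum_cdf L1 L2 t a b"
    unfolding bzip_sum_cdf_def split(1)[of L1] split(1)[of L2] poisson_weight_add seq_conv2_assoc ..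
  finally show ?thesis .
qed

lemma pois_cdf_tendsto_1: "(\<lambda>k. pois_cdf mu k) \<longlonglongrightarrow> 1"
proof -
  have "(\<lambda>k. measure_pmf.prob (pois mu) {..k}) \<longlonglongrightarrow> measure_pmf.prob (pois mu) (\<Union>k. {..k})"
    by (intro measure_pmf.finite_Lim_measure_incseq) (auto simp: incseq_def)
  moreover have "(\<Union>k. {..k::nat}) = UNIV" by auto
  ultimately show ?thesis by (simp add: pois_cdf_def)
qed

lemma pois_quantile_le_iff:
  assumes "0 < u" and "u < 1"
  shows "pois_quantile mu u \<le> k \<longleftrightarrow> u \<le> pois_cdf mu k"
proof (cases "mu = 0")
  case True
  then show ?thesis using assms by (simp add: pois_quantile_def pois_cdf_def pois_def)
next
  case False
  define S where "S = {k. u \<le> pois_cdf mu k}"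
  have "\<forall>\<^sub>F k in sequentially. u < pois_cdf mu k"
    using order_tendstoD(1)[OF pois_cdf_tendsto_1 \<open>u < 1\<close>] .
  then have "S \<noteq> {}" by (auto simp: S_def eventually_sequentially dest: less_imp_le)
  then have "Inf S \<in> S" by (rule Inf_nat_def1)
  moreover have "pois_quantile mu u = Inf S"
    using False by (simp add: pois_quantile_def S_def)
  ultimately show ?thesis
    using pois_cdf_mono[of "Inf S" k mu] cInf_lower[of k S] by (auto simp: S_def)
qed

lemma measurable_pois_quantile[measurable]: "pois_quantile mu \<in> borel \<rightarrow>\<^sub>M count_space UNIV"
proof (cases "mu = 0")
  case False
  then have "pois_quantile mu = (\<lambda>u. LEAST k. u \<le> pois_cdf mu k)"
    by (simp add: fun_eq_iff pois_quantile_def Inf_nat_def)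
  then show ?thesis by simp
qed (simp add: pois_quantile_def[abs_def])

lemma emeasure_countermonotone_quantiles:
  assumes "0 \<le> m1" "0 \<le> m2"
  shows "emeasure (uniform_measure lborel {0..1})
      {u. pois_quantile m1 u \<le> c \<and> pois_quantile m2 (1 - u) \<le> d}
    = ennreal (countermonotone_cdf m1 m2 c d)"
proof -
  define lo hi where "lo = 1 - pois_cdf m2 d" and "hi = pois_cdf m1 c"
  have "0 \<le> lo" "hi \<le> 1" by (simp_all add: lo_def hi_def pois_cdf_le_1)
  have mem: "pois_quantile m1 u \<le> c \<and> pois_quantile m2 (1 - u) \<le> d \<longleftrightarrow> u \<in> {lo..hi}"
    if "u \<in> {0..1}" "u \<noteq> 0" "u \<noteq> 1" for u
  proof -
    have "0 < u" "u < 1" using that by auto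
    then show ?thesis
      using pois_quantile_le_iff[of u m1 c] pois_quantile_le_iff[of "1 - u" m2 d]
      by (auto simp: lo_def hi_def)
  qed
  have "AE u in lborel. u \<noteq> 0 \<and> u \<noteq> 1"
    using AE_lborel_singleton[of 0] AE_lborel_singleton[of 1] by (rule AE_conjI)
  then have "AE u in lborel. u \<in> {0..1} \<longrightarrow>
      (pois_quantile m1 u \<le> c \<and> pois_quantile m2 (1 - u) \<le> d \<longleftrightarrow> u \<in> {lo..hi})"
    by (rule AE_mp) (use mem in auto)
  then have "emeasure (uniform_measure lborel {0..1})
      {u. pois_quantile m1 u \<le> c \<and> pois_quantile m2 (1 - u) \<le> d}
    = emeasure (uniform_measure lborel {0..1}) {lo..hi}"
    by (intro emeasure_eq_AE AE_uniform_measureI) auto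
  also have "\<dots> = emeasure lborel {lo..hi}"
    using \<open>0 \<le> lo\<close> \<open>hi \<le> 1\<close> by (simp add: Int_absorb1 divide_ennreal_def)
  also have "\<dots> = ennreal (countermonotone_cdf m1 m2 c d)"
    by (simp add: countermonotone_cdf_def lower_frechet_def lo_def hi_def max_def)
  finally show ?thesis .
qed

lemma sets_bzip_minus_box:
  "bzip_minus_rv Lam t -` ({..a} \<times> {..b}) \<in> sets (bzip_space Lam t phi)"
proof -
  have "Measurable.pred (count_space UNIV \<Otimes>\<^sub>M borel) (\<lambda>\<omega>. bzip_minus_rv Lam t \<omega> \<in> {..a} \<times> {..b})"
  proof (rule measurable_pair_measure_countable1)
    fix z :: "bool \<times> nat \<times> nat"
    obtain w y1 y2 where "z = (w, y1, y2)" by (cases z)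
    then show "Measurable.pred borel (\<lambda>u. bzip_minus_rv Lam t (z, u) \<in> {..a} \<times> {..b})"
      by (cases w) (simp_all add: bzip_minus_rv_def)
  qed simp
  moreover have "sets (bzip_space Lam t phi) = sets (count_space UNIV \<Otimes>\<^sub>M borel)"
    unfolding bzip_space_def by (intro sets_pair_measure_cong) auto
  ultimately show ?thesis by (simp add: pred_def space_pair_measure vimage_def)
qed

lemma emeasure_bzip_minus_section:
  assumes "0 \<le> L1" "0 \<le> L2" "0 \<le> t"
  shows "emeasure (uniform_measure lborel {0..1})
      (Pair (w, y) -` bzip_minus_rv (L1, L2) t -` ({..a} \<times> {..b}))
    = (if w then ennreal (if fst y \<le> a \<and> snd y \<le> b
         then countermonotone_cdf (t * L1) (t * L2) (a - fst y) (b - snd y) else 0) else 1)"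
proof -
  obtain y1 y2 where y: "y = (y1, y2)" by (cases y)
  show ?thesis
  proof (cases "w \<and> y1 \<le> a \<and> y2 \<le> b")
    case True
    then have "Pair (w, y) -` bzip_minus_rv (L1, L2) t -` ({..a} \<times> {..b}) =
        {u. pois_quantile (t * L1) u \<le> a - y1 \<and> pois_quantile (t * L2) (1 - u) \<le> b - y2}"
      by (auto simp: y bzip_minus_rv_def)
    then show ?thesis
      using True assms
      by (simp add: y emeasure_countermonotone_quantiles del: emeasure_uniform_measure)
  next
    case False
    then show ?thesis
      by (cases w) (auto simp: y bzip_minus_rv_def vimage_def divide_ennreal_def
          emeasure_lborel_Icc_eq)
  qed
qed

lemma nn_integral_pois_pair:
  assumes "0 \<le> m1" "0 \<le> m2" and "\<And>c d. 0 \<le> K c d"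
  shows "(\<integral>\<^sup>+y. ennreal (if fst y \<le> a \<and> snd y \<le> b then K (a - fst y) (b - snd y) else 0)
      \<partial>pair_pmf (pois m1) (pois m2))
    = ennreal (seq_conv2 (poisson_weight m1) (poisson_weight m2) K a b)"
proof -
  define g where "g y = (if fst y \<le> a \<and> snd y \<le> b then K (a - fst y) (b - snd y) else 0)" for y
  have "(\<integral>\<^sup>+y. ennreal (g y) \<partial>pair_pmf (pois m1) (pois m2)) =
      (\<Sum>y\<in>{..a} \<times> {..b}. ennreal (g y) * pmf (pair_pmf (pois m1) (pois m2)) y)"
    by (intro nn_integral_measure_pmf_support) (auto simp: g_def)
  also have "\<dots> = ennreal (\<Sum>y\<in>{..a} \<times> {..b}. g y * pmf (pair_pmf (pois m1) (pois m2)) y)"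
    using assms by (simp add: sum_ennreal[symmetric] ennreal_mult' g_def)
  also have "(\<Sum>y\<in>{..a} \<times> {..b}. g y * pmf (pair_pmf (pois m1) (pois m2)) y) =
      (\<Sum>y1\<le>a. \<Sum>y2\<le>b. g (y1, y2) * pmf (pair_pmf (pois m1) (pois m2)) (y1, y2))"
    by (simp add: sum.cartesian_product)
  also have "\<dots> = seq_conv2 (poisson_weight m1) (poisson_weight m2) K a b"
    using assms
    by (auto simp: seq_conv2_def seq_conv_def g_def pmf_pair pmf_pois
        sum_distrib_left mult_ac intro!: sum.cong)
  finally show ?thesis unfolding g_def .
qed

lemma emeasure_bzip_minus_box:
  assumes "0 \<le> L1" "0 \<le> L2" "0 \<le> phi" "phi \<le> 1" "0 \<le> t" "t \<le> 1"
  shows "emeasure (bzip_space (L1, L2) t phi) (bzip_minus_rv (L1, L2) t -` ({..a} \<times> {..b}))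
    = ennreal (phi + (1 - phi) * bzip_sum_cdf L1 L2 t a b)"
proof -
  define N where "N = uniform_measure lborel {0..1::real}"
  define R where "R = pair_pmf (pois ((1 - t) * L1)) (pois ((1 - t) * L2))"
  define E where "E = bzip_minus_rv (L1, L2) t -` ({..a} \<times> {..b})"
  define g where "g y = (if fst y \<le> a \<and> snd y \<le> b
      then countermonotone_cdf (t * L1) (t * L2) (a - fst y) (b - snd y) else 0)" for y
  define S where "S = bzip_sum_cdf L1 L2 t a b"
  interpret N: prob_space N
    unfolding N_def by (intro prob_space_uniform_measure) auto
  have "0 \<le> S"
    using assms by (simp add: S_def bzip_sum_cdf_nonneg)
  have integral_R: "(\<integral>\<^sup>+y. ennreal (g y) \<partial>R) = ennreal S"
    using assms unfolding R_def g_def S_def bzip_sum_cdf_def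
    by (intro nn_integral_pois_pair) (auto simp: countermonotone_cdf_def lower_frechet_def)
  have "emeasure (bzip_space (L1, L2) t phi) E =
      (\<integral>\<^sup>+z. emeasure N (Pair z -` E) \<partial>pair_pmf (bernoulli_pmf (1 - phi)) R)"
    using sets_bzip_minus_box[of "(L1, L2)" t a b phi]
    unfolding bzip_space_def fst_conv snd_conv N_def[symmetric] R_def[symmetric] E_def
    by (intro N.emeasure_pair_measure_alt) simp
  also have "\<dots> = (\<integral>\<^sup>+w. (if w then ennreal S else 1) \<partial>bernoulli_pmf (1 - phi))"
    unfolding nn_integral_pair_pmf'
    using assms by (intro nn_integral_cong) (auto simp: N_def E_def g_def emeasure_bzip_minus_section
        measure_pmf.emeasure_space_1 integral_R[unfolded g_def] simp del: emeasure_uniform_measure)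
  also have "\<dots> = ennreal phi + ennreal S * ennreal (1 - phi)"
    using assms by (subst nn_integral_measure_pmf_support[of UNIV]) (auto simp: UNIV_bool)
  also have "\<dots> = ennreal (phi + (1 - phi) * S)"
    using assms \<open>0 \<le> S\<close>
    by (simp add: ennreal_mult[symmetric] ennreal_plus[symmetric] mult.commute del: ennreal_plus)
  finally show ?thesis unfolding E_def S_def .
qed

lemma H_minus_eq_bzip_sum_cdf:
  assumes "0 \<le> L1" "0 \<le> L2" "0 \<le> phi" "phi \<le> 1" "0 \<le> t" "t \<le> 1" "0 \<le> x1" "0 \<le> x2"
  shows "H_minus (L1, L2) phi t x1 x2 = phi + (1 - phi) * bzip_sum_cdf L1 L2 t (nat \<lfloor>x1\<rfloor>) (nat \<lfloor>x2\<rfloor>)"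
proof -
  have "{\<omega> \<in> space (bzip_space (L1, L2) t phi).
        real (fst (bzip_minus_rv (L1, L2) t \<omega>)) \<le> x1 \<and> real (snd (bzip_minus_rv (L1, L2) t \<omega>)) \<le> x2}
      = bzip_minus_rv (L1, L2) t -` ({..nat \<lfloor>x1\<rfloor>} \<times> {..nat \<lfloor>x2\<rfloor>})"
    using assms by (auto simp: bzip_space_def space_pair_measure mem_Times_iff) linarith+
  moreover have "0 \<le> phi + (1 - phi) * bzip_sum_cdf L1 L2 t (nat \<lfloor>x1\<rfloor>) (nat \<lfloor>x2\<rfloor>)"
    using assms bzip_sum_cdf_nonneg by simp
  ultimately show ?thesis
    using assms by (simp add: H_minus_def measure_def emeasure_bzip_minus_box)
qed

lemma H_minus_neg_eq_0:
  assumes "x1 < 0 \<or> x2 < 0"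
  shows "H_minus Lam phi t x1 x2 = 0"
proof -
  have "\<not> (real n \<le> x1 \<and> real m \<le> x2)" for n m
    using assms by linarith
  then have empty: "{\<omega> \<in> space (bzip_space Lam t phi).
      real (fst (bzip_minus_rv Lam t \<omega>)) \<le> x1 \<and> real (snd (bzip_minus_rv Lam t \<omega>)) \<le> x2} = {}"
    by blast
  show ?thesis
    unfolding H_minus_def empty by simp
qed

theorem corollary2:
  fixes lam1 lam2 phi theta theta' :: real
  assumes "0 < lam1" and "0 < lam2"
    and "0 \<le> phi" and "phi < 1"
    and "0 \<le> theta" and "theta < theta'" and "theta' \<le> 1"
  shows "\<forall>x1 x2 :: real.
           H_minus (lam1, lam2) phi theta' x1 x2 \<le> H_minus (lam1, lam2) phi theta x1 x2"
proof (intro allI)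
  fix x1 x2 :: real
  show "H_minus (lam1, lam2) phi theta' x1 x2 \<le> H_minus (lam1, lam2) phi theta x1 x2"
  proof (cases "x1 < 0 \<or> x2 < 0")
    case True
    then show ?thesis by (simp add: H_minus_neg_eq_0)
  next
    case False
    have "bzip_sum_cdf lam1 lam2 theta' (nat \<lfloor>x1\<rfloor>) (nat \<lfloor>x2\<rfloor>)
        \<le> bzip_sum_cdf lam1 lam2 theta (nat \<lfloor>x1\<rfloor>) (nat \<lfloor>x2\<rfloor>)"
      using assms by (intro bzip_sum_cdf_antimono) auto
    then show ?thesis
      using assms False by (simp add: H_minus_eq_bzip_sum_cdf mult_left_mono)
  qed
qed

end
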